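(* Let $n\ge 2$, $1\le n_1\le n-1$, $n_2=n-n_1$, and let $\xi_1,\dots,\xi_n$ be an orthonormal basis of $\mathbb{C}^n$. Let $\Pi_1$ be the orthogonal projection onto $\mathrm{span}\{\xi_1,\dots,\xi_{n_1}\}$ and $\Pi_2$ the orthogonal projection onto $\mathrm{span}\{\xi_{n_1+1},\dots,\xi_n\}$. Let $U$ be an $n\times n$ unitary matrix, $B_1=\Pi_1U$, $B_2=\Pi_2U$, and assume $\{B_1,B_2\}$ is unital, i.e. $B_1B_1^*+B_2B_2^*=I$. Let $0\le p\le 1$, $q=1-p$, and for $k,k'\in\mathbb{R}$ put $\omega_k=e^{ik}$, $B_{1k}=\overline{\omega}_kB_1$, $B_{2k}=\omega_kB_2$, $U_k=B_{1k}+B_{2k}$, and define the linear map $\mathcal{L}_{k,k'}$ on $n\times n$ complex matrices by $$\mathcal{L}_{k,k'}(\rho)=p\left(B_{1k}\rho B_{1k'}^*+B_{2k}\rho B_{2k'}^*\right)+qU_k\rho U_{k'}^*.$$ Let $\gamma_1=\frac{1}{\sqrt n}I$, for $2\le l\le n$ let $\gamma_l=\frac{1}{\sqrt{l(l-1)}}\,\mathrm{diag}(1,\dots,1,-(l-1),0,\dots,0)$ (with $l-1$ entries equal to $1$), and for $k\ne j$ let $\gamma_{k,j}$ be the normalized off-diagonal generalized Gell-Mann matrices (the normalization of $E_{kj}+E_{jk}$ for $k<j$ and of $-i(E_{jk}-E_{kj})$ for $k>j$, where $E_{kj}$ is the matrix unit in the basis $\xi_1,\dots,\xi_n$). Use the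 Hilbert–Schmidt inner product $\langle X,Y\rangle=\mathrm{Tr}(X^*Y)$ and write $\omega_\nu=e^{i\nu}$. Then for all $k,\nu\in\mathbb{R}$: (1) $\langle \gamma_{k,j},\mathcal{L}_{k,k+\nu}(\gamma_1)\rangle=0$ for all $k\ne j$; (2) $\langle\gamma_1,\mathcal{L}_{k,k+\nu}(\gamma_1)\rangle=\frac{2n_2\cos\nu}{n}+\frac{n_1-n_2}{n}\omega_\nu$; $\langle\gamma_l,\mathcal{L}_{k,k+\nu}(\gamma_1)\rangle=0$ for $2\le l\le n_1$; and $\langle\gamma_l,\mathcal{L}_{k,k+\nu}(\gamma_1)\rangle=\frac{2n_1 i\sin\nu}{\sqrt{n(l-1)l}}$ for $n_1+1\le l\le n$; (3) for every element $\gamma$ of this normalized basis, $\langle\gamma_1,\mathcal{L}_{k,k+\nu}(\gamma)\rangle=\omega_\nu\,\delta_{\gamma\gamma_1}-2i\sin\nu\,\frac{1}{\sqrt n}\mathrm{Tr}(B_2\gamma B_2^* )$. In particular, for $\nu=0$, the matrix of $\mathcal{L}_{k,k}$ with respect to this basis (ordered with $\gamma_1$ first) has first row and first column both equal to $(1,0,\dots,0)$.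
   Context: The basis $\{\gamma_1,\dots,\gamma_n\}\cup\{\gamma_{k,j}:k\neq j\}$ is the generalized Gell-Mann basis normalized to be orthonormal for the Hilbert–Schmidt inner product on $n\times n$ complex matrices. The map $\mathcal{L}_{k,k'}$ is the Fourier-transformed one-step superoperator of a partially open quantum random walk on $\mathbb{Z}$ with decoherence parameter $p$ (right moves governed by $B_1$, left moves by $B_2$). *)

theory Defs
  imports Complex_Main "Jordan_Normal_Form.Matrix"
begin

definition adj :: "complex mat \<Rightarrow> complex mat" where
  "adj A = mat (dim_col A) (dim_row A) (\<lambda>(i,j). cnj (A $$ (j,i)))"

definition tr :: "complex mat \<Rightarrow> complex" where
  "tr A = (\<Sum>i<dim_row A. A $$ (i,i))"

definition hs :: "complex mat \<Rightarrow> complex mat \<Rightarrow> complex" where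
  "hs X Y = tr (adj X * Y)"

definition unitary_mat :: "nat \<Rightarrow> complex mat \<Rightarrow> bool" where
  "unitary_mat n U \<longleftrightarrow> U \<in> carrier_mat n n \<and> U * adj U = 1\<^sub>m n \<and> adj U * U = 1\<^sub>m n"

(* xi 1, ..., xi n is an orthonormal basis of C^n (indices 1-based as in the paper) *)
definition orthonormal_basis :: "nat \<Rightarrow> (nat \<Rightarrow> complex vec) \<Rightarrow> bool" where
  "orthonormal_basis n xi \<longleftrightarrow>
     (\<forall>i\<in>{1..n}. xi i \<in> carrier_vec n) \<and>
     (\<forall>i\<in>{1..n}. \<forall>j\<in>{1..n}. (\<Sum>a<n. cnj (xi i $ a) * xi j $ a) = (if i = j then 1 else 0))"

definition Eunit :: "nat \<Rightarrow> (nat \<Rightarrow> complex vec) \<Rightarrow> nat \<Rightarrow> nat \<Rightarrow> complex mat" where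
  "Eunit n xi k j = mat n n (\<lambda>(a,b). xi k $ a * cnj (xi j $ b))"

definition diag_in :: "nat \<Rightarrow> (nat \<Rightarrow> complex vec) \<Rightarrow> (nat \<Rightarrow> complex) \<Rightarrow> complex mat" where
  "diag_in n xi c = mat n n (\<lambda>(a,b). \<Sum>i\<in>{1..n}. c i * (xi i $ a * cnj (xi i $ b)))"

definition proj_span :: "nat \<Rightarrow> (nat \<Rightarrow> complex vec) \<Rightarrow> nat \<Rightarrow> nat \<Rightarrow> complex mat" where
  "proj_span n xi lo hi = mat n n (\<lambda>(a,b). \<Sum>i\<in>{lo..hi}. xi i $ a * cnj (xi i $ b))"

definition gm1 :: "nat \<Rightarrow> complex mat" where
  "gm1 n = complex_of_real (1 / sqrt (real n)) \<cdot>\<^sub>m 1\<^sub>m n"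

definition gmdiag :: "nat \<Rightarrow> (nat \<Rightarrow> complex vec) \<Rightarrow> nat \<Rightarrow> complex mat" where
  "gmdiag n xi l = complex_of_real (1 / sqrt (real (l * (l - 1)))) \<cdot>\<^sub>m
     diag_in n xi (\<lambda>i. if i < l then 1 else if i = l then - of_nat (l - 1) else 0)"

definition gmoff :: "nat \<Rightarrow> (nat \<Rightarrow> complex vec) \<Rightarrow> nat \<Rightarrow> nat \<Rightarrow> complex mat" where
  "gmoff n xi k j =
     (if k < j then complex_of_real (1 / sqrt 2) \<cdot>\<^sub>m (Eunit n xi k j + Eunit n xi j k)
      else complex_of_real (1 / sqrt 2) \<cdot>\<^sub>m ((- \<i>) \<cdot>\<^sub>m (Eunit n xi j k - Eunit n xi k j)))"

definition omega :: "real \<Rightarrow> complex" where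
  "omega k = exp (\<i> * complex_of_real k)"

definition Lmap :: "real \<Rightarrow> complex mat \<Rightarrow> complex mat \<Rightarrow> real \<Rightarrow> real \<Rightarrow> complex mat \<Rightarrow> complex mat" where
  "Lmap p B1 B2 k k' \<rho> =
     (let B1k = cnj (omega k) \<cdot>\<^sub>m B1; B2k = omega k \<cdot>\<^sub>m B2;
          B1k' = cnj (omega k') \<cdot>\<^sub>m B1; B2k' = omega k' \<cdot>\<^sub>m B2;
          Uk = B1k + B2k; Uk' = B1k' + B2k'; q = 1 - p
      in complex_of_real p \<cdot>\<^sub>m (B1k * \<rho> * adj B1k' + B2k * \<rho> * adj B2k')
         + complex_of_real q \<cdot>\<^sub>m (Uk * \<rho> * adj Uk'))"

end

theory Submission
  imports Defs
begin

text \<open>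
  Write \<open>P\<^sub>1, P\<^sub>2\<close> for the two spectral projections, so that \<open>B\<^sub>i = P\<^sub>i U\<close>.
  Then \<open>B\<^sub>i B\<^sub>j\<^sup>* = \<delta>\<^sub>i\<^sub>j P\<^sub>i\<close>, so on scalar matrices all cross terms of the walk vanish and
  \<open>L\<^sub>k\<^sub>,\<^sub>k\<^sub>+\<^sub>\<nu>(I) = \<omega>\<^sub>\<nu> P\<^sub>1 + conj(\<omega>\<^sub>\<nu>) P\<^sub>2\<close> whatever \<open>p\<close> is. Pairing this with a basis element only sees
  its diagonal coefficients \<open>\<langle>\<xi>\<^sub>i, X \<xi>\<^sub>i\<rangle>\<close>, summed over the two blocks of indices.
  Dually, \<open>B\<^sub>1\<^sup>* B\<^sub>1 + B\<^sub>2\<^sup>* B\<^sub>2 = I\<close> and \<open>B\<^sub>2\<^sup>* B\<^sub>1 = 0\<close> give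
  \<open>Tr L\<^sub>k\<^sub>,\<^sub>k\<^sub>+\<^sub>\<nu>(\<rho>) = \<omega>\<^sub>\<nu> Tr \<rho> + (conj(\<omega>\<^sub>\<nu>) - \<omega>\<^sub>\<nu>) Tr(B\<^sub>2 \<rho> B\<^sub>2\<^sup>*)\<close>, while pairing with
  \<open>\<gamma>\<^sub>1\<close> is \<open>Tr / \<surd>n\<close> and every other Gell-Mann element is traceless.
\<close>

section \<open>Adjoint and trace\<close>

lemma index_mult_mat_sum:
  "A \<in> carrier_mat n m \<Longrightarrow> B \<in> carrier_mat m c \<Longrightarrow> i < n \<Longrightarrow> j < c \<Longrightarrow>
   (A * B) $$ (i, j) = (\<Sum>t<m. A $$ (i, t) * B $$ (t, j))"
  by (auto simp: scalar_prod_def lessThan_atLeast0 intro!: sum.cong)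

lemma adj_carrier_mat [simp]: "A \<in> carrier_mat r c \<Longrightarrow> adj A \<in> carrier_mat c r"
  by (auto simp: adj_def)

lemma dim_adj [simp]: "dim_row (adj A) = dim_col A" "dim_col (adj A) = dim_row A"
  by (auto simp: adj_def)

lemma index_adj [simp]:
  "i < dim_col A \<Longrightarrow> j < dim_row A \<Longrightarrow> adj A $$ (i, j) = cnj (A $$ (j, i))"
  by (auto simp: adj_def)

lemma adj_mult:
  assumes "A \<in> carrier_mat r m" "B \<in> carrier_mat m c"
  shows "adj (A * B) = adj B * adj A"
proof (rule eq_matI)
  fix i j assume ij: "i < dim_row (adj B * adj A)" "j < dim_col (adj B * adj A)"
  have "adj (A * B) $$ (i, j) = cnj (\<Sum>t<m. A $$ (j, t) * B $$ (t, i))"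
    using assms ij by (simp del: index_mult_mat(1) add: index_mult_mat_sum[of A r m B c])
  also have "\<dots> = (\<Sum>t<m. adj B $$ (i, t) * adj A $$ (t, j))"
    using assms ij by (auto simp: mult.commute intro!: sum.cong)
  also have "\<dots> = (adj B * adj A) $$ (i, j)"
    using assms ij by (simp del: index_mult_mat(1) add: index_mult_mat_sum[of "adj B" c m "adj A" r])
  finally show "adj (A * B) $$ (i, j) = (adj B * adj A) $$ (i, j)" .
qed (use assms in auto)

lemma adj_smult: "adj (a \<cdot>\<^sub>m A) = cnj a \<cdot>\<^sub>m adj A"
  by (intro eq_matI) auto

lemma adj_add: "A \<in> carrier_mat r c \<Longrightarrow> B \<in> carrier_mat r c \<Longrightarrow> adj (A + B) = adj A + adj B"
  by (intro eq_matI) auto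

lemma adj_adj [simp]: "adj (adj A) = A"
  by (intro eq_matI) auto

lemma adj_zero [simp]: "adj (0\<^sub>m r c) = 0\<^sub>m c r"
  by (intro eq_matI) auto

lemma adj_one [simp]: "adj (1\<^sub>m n) = 1\<^sub>m n"
  by (intro eq_matI) auto

lemma adj_mult_eq_zero_swap:
  assumes "A \<in> carrier_mat n m" "B \<in> carrier_mat n k" "adj A * B = 0\<^sub>m m k"
  shows "adj B * A = 0\<^sub>m k m"
proof -
  have "adj B * A = adj (adj A * B)"
    using assms(1,2) adj_mult[of "adj A" m n B k] by simp
  then show ?thesis
    using assms(3) by simp
qed

lemma sum_swap3:
  "(\<Sum>x\<in>A. \<Sum>y\<in>B. \<Sum>z\<in>C. f x y z) = (\<Sum>z\<in>C. \<Sum>y\<in>B. \<Sum>x\<in>A. f x y z)"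
proof -
  have "(\<Sum>x\<in>A. \<Sum>y\<in>B. \<Sum>z\<in>C. f x y z) = (\<Sum>x\<in>A. \<Sum>z\<in>C. \<Sum>y\<in>B. f x y z)"
    by (rule sum.cong[OF refl], rule sum.swap)
  also have "\<dots> = (\<Sum>z\<in>C. \<Sum>x\<in>A. \<Sum>y\<in>B. f x y z)"
    by (rule sum.swap)
  also have "\<dots> = (\<Sum>z\<in>C. \<Sum>y\<in>B. \<Sum>x\<in>A. f x y z)"
    by (rule sum.cong[OF refl], rule sum.swap)
  finally show ?thesis .
qed

lemma tr_add:
  "dim_row A = n \<Longrightarrow> dim_col A = n \<Longrightarrow> dim_row B = n \<Longrightarrow> dim_col B = n \<Longrightarrow>
   tr (A + B) = tr A + tr B"
  by (auto simp: tr_def sum.distrib)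

lemma tr_diff:
  "dim_row A = n \<Longrightarrow> dim_col A = n \<Longrightarrow> dim_row B = n \<Longrightarrow> dim_col B = n \<Longrightarrow>
   tr (A - B) = tr A - tr B"
  by (auto simp: tr_def sum_subtractf)

lemma tr_smult: "dim_col A = dim_row A \<Longrightarrow> tr (a \<cdot>\<^sub>m A) = a * tr A"
  by (auto simp: tr_def sum_distrib_left)

lemma tr_zero [simp]: "tr (0\<^sub>m n n) = 0"
  by (auto simp: tr_def)

lemma tr_one_mat: "tr (1\<^sub>m n) = of_nat n"
  by (simp add: tr_def)

lemma tr_mult_comm:
  assumes "A \<in> carrier_mat n m" "B \<in> carrier_mat m n"
  shows "tr (A * B) = tr (B * A)"
proof -
  have "tr (A * B) = (\<Sum>i<n. \<Sum>t<m. A $$ (i, t) * B $$ (t, i))"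
    using assms by (auto simp del: index_mult_mat(1) simp: tr_def index_mult_mat_sum[of _ _ m])
  also have "\<dots> = (\<Sum>t<m. \<Sum>i<n. B $$ (t, i) * A $$ (i, t))"
    by (subst sum.swap) (simp add: mult.commute)
  also have "\<dots> = tr (B * A)"
    using assms by (auto simp del: index_mult_mat(1) simp: tr_def index_mult_mat_sum[of _ _ n])
  finally show ?thesis .
qed

lemma hs_one_left: "dim_row Y = n \<Longrightarrow> hs (1\<^sub>m n) Y = tr Y"
  unfolding hs_def adj_one by (metis carrier_matI left_mult_one_mat)

lemma hs_zero_right [simp]: "X \<in> carrier_mat n n \<Longrightarrow> hs X (0\<^sub>m n n) = 0"
  by (simp add: hs_def)

lemma hs_add_right:
  assumes "X \<in> carrier_mat n n" "dim_row Y = n" "dim_col Y = n" "dim_row Z = n" "dim_col Z = n"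
  shows "hs X (Y + Z) = hs X Y + hs X Z"
proof -
  have "Y \<in> carrier_mat n n" "Z \<in> carrier_mat n n"
    using assms by auto
  then show ?thesis
    using assms by (simp add: hs_def mult_add_distrib_mat[of _ n n _ n] tr_add[of _ n])
qed

lemma hs_smult_right:
  assumes "X \<in> carrier_mat n n" "dim_row Y = n" "dim_col Y = n"
  shows "hs X (c \<cdot>\<^sub>m Y) = c * hs X Y"
proof -
  have "Y \<in> carrier_mat n n"
    using assms by auto
  then show ?thesis
    using assms by (simp add: hs_def mult_smult_distrib[of _ n n _ n] tr_smult)
qed

lemma hs_scalar_left:
  "Y \<in> carrier_mat n n \<Longrightarrow> hs (c \<cdot>\<^sub>m 1\<^sub>m n) Y = cnj c * tr Y"
  by (simp add: hs_def adj_smult mult_smult_assoc_mat[of _ n n _ n] tr_smult)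

lemma assoc_mult_mat_dim:
  "dim_col A = dim_row B \<Longrightarrow> dim_col B = dim_row C \<Longrightarrow> A * B * C = A * (B * C)"
  by (rule assoc_mult_mat[of A "dim_row A" "dim_col A" B "dim_col B" C "dim_col C"])
     (auto intro: carrier_matI)

lemma smult_smult_mat: "a \<cdot>\<^sub>m (b \<cdot>\<^sub>m A) = (a * b :: 'a :: semigroup_mult) \<cdot>\<^sub>m A"
  by (intro eq_matI) (auto simp: mult.assoc)

lemma smult_mult_smult_mat:
  fixes A R C :: "'a :: comm_ring_1 mat"
  assumes "A \<in> carrier_mat n n" "R \<in> carrier_mat n n" "C \<in> carrier_mat n n"
  shows "(c \<cdot>\<^sub>m A) * R * (d \<cdot>\<^sub>m C) = (c * d) \<cdot>\<^sub>m (A * R * C)"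
proof -
  have AR: "A * R \<in> carrier_mat n n"
    using assms by simp
  have "(c \<cdot>\<^sub>m A) * R * (d \<cdot>\<^sub>m C) = c \<cdot>\<^sub>m (A * R) * (d \<cdot>\<^sub>m C)"
    by (simp only: mult_smult_assoc_mat[OF assms(1,2)])
  also have "\<dots> = c \<cdot>\<^sub>m (A * R * (d \<cdot>\<^sub>m C))"
    by (rule mult_smult_assoc_mat[OF AR smult_carrier_mat[OF assms(3)]])
  also have "\<dots> = c \<cdot>\<^sub>m (d \<cdot>\<^sub>m (A * R * C))"
    by (simp only: mult_smult_distrib[OF AR assms(3)])
  finally show ?thesis
    by (simp only: smult_smult_mat)
qed

lemma add_mult_add_mat:
  fixes A1 A2 R C1 C2 :: "'a :: semiring_0 mat"
  shows "A1 \<in> carrier_mat n n \<Longrightarrow> A2 \<in> carrier_mat n n \<Longrightarrow> R \<in> carrier_mat n n \<Longrightarrow>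
   C1 \<in> carrier_mat n n \<Longrightarrow> C2 \<in> carrier_mat n n \<Longrightarrow>
   (A1 + A2) * R * (C1 + C2) = (A1 * R * C1 + A2 * R * C1) + (A1 * R * C2 + A2 * R * C2)"
  by (simp add: add_mult_distrib_mat[of _ n n] mult_add_distrib_mat[of _ n n])

section \<open>The superoperator\<close>

lemma hs_Lmap:
  assumes X: "X \<in> carrier_mat n n" and R: "R \<in> carrier_mat n n"
    and B1: "B1 \<in> carrier_mat n n" and B2: "B2 \<in> carrier_mat n n"
  shows "hs X (Lmap p B1 B2 k k' R) =
     cnj (omega k) * omega k' * hs X (B1 * R * adj B1) + omega k * cnj (omega k') * hs X (B2 * R * adj B2)
     + of_real (1 - p) * (cnj (omega k) * cnj (omega k') * hs X (B1 * R * adj B2)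
                  + omega k * omega k' * hs X (B2 * R * adj B1))"
proof -
  let ?a = "omega k" and ?b = "omega k'"
  have adjB: "adj B1 \<in> carrier_mat n n" "adj B2 \<in> carrier_mat n n"
    using B1 B2 by auto
  have walk_term: "(cnj ?a \<cdot>\<^sub>m B1 + ?a \<cdot>\<^sub>m B2) * R * adj (cnj ?b \<cdot>\<^sub>m B1 + ?b \<cdot>\<^sub>m B2)
     = ((cnj ?a * ?b) \<cdot>\<^sub>m (B1 * R * adj B1) + (?a * ?b) \<cdot>\<^sub>m (B2 * R * adj B1))
       + ((cnj ?a * cnj ?b) \<cdot>\<^sub>m (B1 * R * adj B2) + (?a * cnj ?b) \<cdot>\<^sub>m (B2 * R * adj B2))"
    using B1 B2 R adjB unfolding adj_add[of _ n n, OF smult_carrier_mat smult_carrier_mat, OF B1 B2] adj_smult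
    by (subst add_mult_add_mat[of _ n]) (simp_all add: smult_mult_smult_mat[of _ n])
  have sandwiches: "(cnj ?a \<cdot>\<^sub>m B1) * R * adj (cnj ?b \<cdot>\<^sub>m B1) = (cnj ?a * ?b) \<cdot>\<^sub>m (B1 * R * adj B1)"
      "(?a \<cdot>\<^sub>m B2) * R * adj (?b \<cdot>\<^sub>m B2) = (?a * cnj ?b) \<cdot>\<^sub>m (B2 * R * adj B2)"
    using B1 B2 R adjB by (simp_all add: adj_smult smult_mult_smult_mat[of _ n])
  have "hs X (Lmap p B1 B2 k k' R) =
      of_real p * ((cnj ?a * ?b) * hs X (B1 * R * adj B1) + (?a * cnj ?b) * hs X (B2 * R * adj B2))
    + of_real (1 - p) * (((cnj ?a * ?b) * hs X (B1 * R * adj B1) + (?a * ?b) * hs X (B2 * R * adj B1))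
       + ((cnj ?a * cnj ?b) * hs X (B1 * R * adj B2) + (?a * cnj ?b) * hs X (B2 * R * adj B2)))"
    unfolding Lmap_def Let_def sandwiches walk_term using X R B1 B2 adjB
    by (simp add: hs_add_right[of _ n] hs_smult_right[of _ n])
  then show ?thesis
    by (simp add: algebra_simps)
qed

lemma omega_eq_cis: "omega x = cis x"
  by (simp add: omega_def cis_conv_exp)

lemma omega_mult_cnj_omega:
  "cnj (omega k) * omega (k + \<nu>) = omega \<nu>" "omega k * cnj (omega (k + \<nu>)) = cnj (omega \<nu>)"
  by (simp_all add: omega_eq_cis cis_cnj cis_mult)

lemma cnj_omega_minus_omega: "cnj (omega \<nu>) - omega \<nu> = - 2 * \<i> * of_real (sin \<nu>)"
  by (simp add: omega_eq_cis complex_eq_iff)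

lemma hs_Lmap_scalar_identity:
  assumes X: "X \<in> carrier_mat n n" and B1: "B1 \<in> carrier_mat n n" and B2: "B2 \<in> carrier_mat n n"
    and orth: "B1 * adj B2 = 0\<^sub>m n n"
  shows "hs X (Lmap p B1 B2 k (k + \<nu>) (c \<cdot>\<^sub>m 1\<^sub>m n))
    = c * (omega \<nu> * hs X (B1 * adj B1) + cnj (omega \<nu>) * hs X (B2 * adj B2))"
proof -
  have scalar: "A * (c \<cdot>\<^sub>m 1\<^sub>m n) * adj C = c \<cdot>\<^sub>m (A * adj C)"
    if "A \<in> carrier_mat n n" "C \<in> carrier_mat n n" for A C
    using that by (simp add: mult_smult_distrib[of _ n n _ n] mult_smult_assoc_mat[of _ n n _ n])
  have "B2 * adj B1 = 0\<^sub>m n n"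
    using adj_mult_eq_zero_swap[of "adj B1" n n "adj B2" n] orth B1 B2 by simp
  then have "hs X (Lmap p B1 B2 k (k + \<nu>) (c \<cdot>\<^sub>m 1\<^sub>m n))
      = cnj (omega k) * omega (k + \<nu>) * (c * hs X (B1 * adj B1))
        + omega k * cnj (omega (k + \<nu>)) * (c * hs X (B2 * adj B2))"
    using X B1 B2 orth by (simp add: hs_Lmap[of X n] scalar hs_smult_right[of _ n])
  then show ?thesis
    unfolding omega_mult_cnj_omega by (simp add: algebra_simps)
qed

lemma dim_row_Lmap [simp]:
  "B1 \<in> carrier_mat n n \<Longrightarrow> B2 \<in> carrier_mat n n \<Longrightarrow> dim_row (Lmap p B1 B2 k k' R) = n"
  by (simp add: Lmap_def Let_def)

lemma Lmap_carrier_mat [simp]: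
  "B1 \<in> carrier_mat n n \<Longrightarrow> B2 \<in> carrier_mat n n \<Longrightarrow> Lmap p B1 B2 k k' R \<in> carrier_mat n n"
  by (rule carrier_matI) (simp_all add: Lmap_def Let_def)

lemma tr_Lmap:
  assumes R: "R \<in> carrier_mat n n" and B1: "B1 \<in> carrier_mat n n" and B2: "B2 \<in> carrier_mat n n"
    and complete: "adj B1 * B1 + adj B2 * B2 = 1\<^sub>m n" and orth: "adj B2 * B1 = 0\<^sub>m n n"
  shows "tr (Lmap p B1 B2 k (k + \<nu>) R)
    = omega \<nu> * tr R - 2 * \<i> * of_real (sin \<nu>) * tr (B2 * R * adj B2)"
proof -
  have tr_sandwich: "tr (A * R * adj C) = tr (adj C * (A * R))"
    if "A \<in> carrier_mat n n" "C \<in> carrier_mat n n" for A C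
    using that R by (intro tr_mult_comm[of "A * R" n n "adj C"]) auto
  have "adj B1 * B2 = 0\<^sub>m n n"
    using adj_mult_eq_zero_swap[OF B2 B1 orth] .
  then have "adj B2 * (B1 * R) = 0\<^sub>m n n" "adj B1 * (B2 * R) = 0\<^sub>m n n"
    using orth B1 B2 R
    by (simp_all del: assoc_mult_mat
        add: assoc_mult_mat[of "adj B2" n n B1 n R n, symmetric] assoc_mult_mat[of "adj B1" n n B2 n R n, symmetric])
  then have L: "tr (Lmap p B1 B2 k (k + \<nu>) R)
      = omega \<nu> * tr (adj B1 * (B1 * R)) + cnj (omega \<nu>) * tr (adj B2 * (B2 * R))"
    using hs_Lmap[OF one_carrier_mat R B1 B2, of p k "k + \<nu>"] R B1 B2 orth
    by (simp add: hs_one_left tr_sandwich omega_mult_cnj_omega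
        del: assoc_mult_mat)
  have trace_preserving: "tr (adj B1 * (B1 * R)) + tr (adj B2 * (B2 * R)) = tr R"
  proof -
    have c: "adj B1 * B1 \<in> carrier_mat n n" "adj B2 * B2 \<in> carrier_mat n n"
      using B1 B2 by auto
    have "adj B1 * B1 * R = adj B1 * (B1 * R)" "adj B2 * B2 * R = adj B2 * (B2 * R)"
      using B1 B2 R by (simp_all add: assoc_mult_mat[of _ n n _ n R n])
    then have "tr (adj B1 * (B1 * R)) + tr (adj B2 * (B2 * R)) = tr ((adj B1 * B1 + adj B2 * B2) * R)"
      using B1 B2 R by (simp add: add_mult_distrib_mat[OF c R] tr_add[of _ n])
    then show ?thesis
      using R by (simp add: complete)
  qed
  have B2_term: "tr (adj B2 * (B2 * R)) = tr (B2 * R * adj B2)"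
    using tr_sandwich[OF B2 B2] by simp
  have B1_term: "tr (adj B1 * (B1 * R)) = tr R - tr (B2 * R * adj B2)"
    using trace_preserving unfolding B2_term by (simp add: eq_diff_eq)
  have "tr (Lmap p B1 B2 k (k + \<nu>) R)
      = omega \<nu> * tr R + (cnj (omega \<nu>) - omega \<nu>) * tr (B2 * R * adj B2)"
    unfolding L B1_term B2_term by (simp add: algebra_simps)
  then show ?thesis
    by (simp add: cnj_omega_minus_omega)
qed

section \<open>Matrices in an orthonormal basis\<close>

definition proj_on :: "nat \<Rightarrow> (nat \<Rightarrow> complex vec) \<Rightarrow> nat set \<Rightarrow> complex mat" where
  "proj_on n xi S = mat n n (\<lambda>(a, b). \<Sum>i\<in>S. xi i $ a * cnj (xi i $ b))"

definition diag_coeff :: "nat \<Rightarrow> (nat \<Rightarrow> complex vec) \<Rightarrow> nat \<Rightarrow> complex mat \<Rightarrow> complex" where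
  "diag_coeff n xi i Y = (\<Sum>a<n. \<Sum>b<n. cnj (xi i $ a) * Y $$ (a, b) * xi i $ b)"

lemma proj_span_eq_proj_on: "proj_span n xi lo hi = proj_on n xi {lo..hi}"
  by (simp add: proj_span_def proj_on_def)

lemma proj_on_carrier_mat [simp]:
  "proj_on n xi S \<in> carrier_mat n n" "dim_row (proj_on n xi S) = n" "dim_col (proj_on n xi S) = n"
  by (simp_all add: proj_on_def)

lemma Eunit_carrier_mat [simp]:
  "Eunit n xi a b \<in> carrier_mat n n" "dim_row (Eunit n xi a b) = n" "dim_col (Eunit n xi a b) = n"
  by (simp_all add: Eunit_def)

lemma diag_in_carrier_mat [simp]:
  "diag_in n xi c \<in> carrier_mat n n" "dim_row (diag_in n xi c) = n" "dim_col (diag_in n xi c) = n"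
  by (simp_all add: diag_in_def)

lemma adj_proj_on [simp]: "adj (proj_on n xi S) = proj_on n xi S"
  by (intro eq_matI) (auto simp: proj_on_def mult.commute)

lemma orthonormal_basisD:
  "orthonormal_basis n xi \<Longrightarrow> i \<in> {1..n} \<Longrightarrow> j \<in> {1..n} \<Longrightarrow>
   (\<Sum>a<n. cnj (xi i $ a) * xi j $ a) = (if i = j then 1 else 0)"
  by (simp add: orthonormal_basis_def)

lemma orthonormal_basisD':
  assumes "orthonormal_basis n xi" "i \<in> {1..n}" "j \<in> {1..n}"
  shows "(\<Sum>a<n. xi i $ a * cnj (xi j $ a)) = (if i = j then 1 else 0)"
proof -
  have "(\<Sum>a<n. xi i $ a * cnj (xi j $ a)) = cnj (\<Sum>a<n. cnj (xi i $ a) * xi j $ a)"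
    by (simp add: mult.commute)
  then show ?thesis
    using orthonormal_basisD[OF assms] by simp
qed

lemma proj_on_mult:
  assumes basis: "orthonormal_basis n xi" and S: "S \<subseteq> {1..n}" and T: "T \<subseteq> {1..n}"
  shows "proj_on n xi S * proj_on n xi T = proj_on n xi (S \<inter> T)"
proof (rule eq_matI)
  fix a b assume "a < dim_row (proj_on n xi (S \<inter> T))" "b < dim_col (proj_on n xi (S \<inter> T))"
  then have ab: "a < n" "b < n" by (auto simp: proj_on_def)
  have fin: "finite S" "finite T"
    using S T finite_subset by auto
  have "(proj_on n xi S * proj_on n xi T) $$ (a, b)
      = (\<Sum>y<n. (\<Sum>i\<in>S. xi i $ a * cnj (xi i $ y)) * (\<Sum>j\<in>T. xi j $ y * cnj (xi j $ b)))"
    using ab by (simp del: index_mult_mat(1) add: index_mult_mat_sum[of _ n n _ n] proj_on_def)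
  also have "\<dots> = (\<Sum>i\<in>S. \<Sum>j\<in>T. xi i $ a * cnj (xi j $ b) * (\<Sum>y<n. cnj (xi i $ y) * xi j $ y))"
    by (simp add: sum_distrib_left sum_distrib_right sum.swap[of _ "{..<n}"] algebra_simps)
  also have "\<dots> = (\<Sum>i\<in>S. \<Sum>j\<in>T. if i = j then xi i $ a * cnj (xi j $ b) else 0)"
    using S T by (intro sum.cong refl) (simp add: orthonormal_basisD[OF basis] subset_iff)
  also have "\<dots> = (\<Sum>i\<in>S \<inter> T. xi i $ a * cnj (xi i $ b))"
    using fin by (simp add: sum.delta sum.inter_restrict)
  also have "\<dots> = proj_on n xi (S \<inter> T) $$ (a, b)"
    using ab by (simp add: proj_on_def)
  finally show "(proj_on n xi S * proj_on n xi T) $$ (a, b) = proj_on n xi (S \<inter> T) $$ (a, b)" .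
qed (auto simp: proj_on_def)

lemma proj_on_empty [simp]: "proj_on n xi {} = 0\<^sub>m n n"
  by (intro eq_matI) (auto simp: proj_on_def)

lemma tr_mult_proj_on:
  assumes "Y \<in> carrier_mat n n" "finite S"
  shows "tr (Y * proj_on n xi S) = (\<Sum>i\<in>S. diag_coeff n xi i Y)"
proof -
  have "tr (Y * proj_on n xi S) = (\<Sum>a<n. \<Sum>b<n. Y $$ (a, b) * (\<Sum>i\<in>S. xi i $ b * cnj (xi i $ a)))"
    using assms
    by (auto simp del: index_mult_mat(1) simp: tr_def index_mult_mat_sum[of _ n n _ n] proj_on_def)
  also have "\<dots> = (\<Sum>i\<in>S. diag_coeff n xi i Y)"
    unfolding diag_coeff_def by (simp add: sum_distrib_left sum.swap[of _ S] algebra_simps)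
  finally show ?thesis .
qed

lemma diag_coeff_adj: "Y \<in> carrier_mat n n \<Longrightarrow> diag_coeff n xi i (adj Y) = cnj (diag_coeff n xi i Y)"
  unfolding diag_coeff_def
  by (subst sum.swap) (auto simp: mult.commute mult.left_commute intro!: sum.cong)

lemma hs_proj_on:
  "X \<in> carrier_mat n n \<Longrightarrow> finite S \<Longrightarrow> hs X (proj_on n xi S) = (\<Sum>i\<in>S. cnj (diag_coeff n xi i X))"
  by (simp add: hs_def tr_mult_proj_on[of _ n] diag_coeff_adj)

lemma diag_coeff_smult:
  "dim_row Y = n \<Longrightarrow> dim_col Y = n \<Longrightarrow> diag_coeff n xi i (c \<cdot>\<^sub>m Y) = c * diag_coeff n xi i Y"
  unfolding diag_coeff_def by (auto simp: sum_distrib_left algebra_simps intro!: sum.cong)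

lemma diag_coeff_add:
  "dim_row Y = n \<Longrightarrow> dim_col Y = n \<Longrightarrow> dim_row Z = n \<Longrightarrow> dim_col Z = n \<Longrightarrow>
   diag_coeff n xi i (Y + Z) = diag_coeff n xi i Y + diag_coeff n xi i Z"
  unfolding diag_coeff_def by (auto simp: sum.distrib algebra_simps intro!: sum.cong)

lemma diag_coeff_diff:
  "dim_row Y = n \<Longrightarrow> dim_col Y = n \<Longrightarrow> dim_row Z = n \<Longrightarrow> dim_col Z = n \<Longrightarrow>
   diag_coeff n xi i (Y - Z) = diag_coeff n xi i Y - diag_coeff n xi i Z"
  unfolding diag_coeff_def by (auto simp: sum_subtractf algebra_simps intro!: sum.cong)

lemma diag_coeff_one:
  assumes "orthonormal_basis n xi" "i \<in> {1..n}"
  shows "diag_coeff n xi i (1\<^sub>m n) = 1"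
proof -
  have "diag_coeff n xi i (1\<^sub>m n) = (\<Sum>a<n. cnj (xi i $ a) * xi i $ a)"
    unfolding diag_coeff_def by (auto intro!: sum.cong simp: if_distrib if_distribR cong: if_cong)
  then show ?thesis
    using orthonormal_basisD[OF assms assms(2)] by simp
qed

lemma diag_coeff_Eunit:
  assumes basis: "orthonormal_basis n xi" and "i \<in> {1..n}" "a \<in> {1..n}" "b \<in> {1..n}"
  shows "diag_coeff n xi i (Eunit n xi a b) = (if i = a \<and> i = b then 1 else 0)"
proof -
  have "diag_coeff n xi i (Eunit n xi a b)
      = (\<Sum>x<n. cnj (xi i $ x) * xi a $ x) * (\<Sum>y<n. cnj (xi b $ y) * xi i $ y)"
    unfolding diag_coeff_def Eunit_def by (auto simp: sum_product algebra_simps intro!: sum.cong)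
  then show ?thesis
    using assms by (simp add: orthonormal_basisD)
qed

lemma diag_coeff_diag_in:
  assumes basis: "orthonormal_basis n xi" and i: "i \<in> {1..n}"
  shows "diag_coeff n xi i (diag_in n xi c) = c i"
proof -
  have "diag_coeff n xi i (diag_in n xi c)
      = (\<Sum>j\<in>{1..n}. c j * ((\<Sum>a<n. cnj (xi i $ a) * xi j $ a) * (\<Sum>b<n. cnj (xi j $ b) * xi i $ b)))"
    unfolding diag_coeff_def diag_in_def
    by (simp add: sum_product sum_distrib_left sum_distrib_right algebra_simps) (rule sum_swap3)
  also have "\<dots> = (\<Sum>j\<in>{1..n}. if j = i then c i else 0)"
    using i by (intro sum.cong refl) (auto simp: orthonormal_basisD[OF basis])
  finally show ?thesis
    using i by simp
qed

lemma tr_Eunit: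
  assumes "orthonormal_basis n xi" "a \<in> {1..n}" "b \<in> {1..n}"
  shows "tr (Eunit n xi a b) = (if a = b then 1 else 0)"
  using assms by (simp add: tr_def Eunit_def orthonormal_basisD')

lemma tr_diag_in:
  assumes basis: "orthonormal_basis n xi"
  shows "tr (diag_in n xi c) = (\<Sum>i\<in>{1..n}. c i)"
proof -
  have "tr (diag_in n xi c) = (\<Sum>i\<in>{1..n}. c i * (\<Sum>a<n. xi i $ a * cnj (xi i $ a)))"
    by (simp add: tr_def diag_in_def sum_distrib_left) (rule sum.swap)
  also have "\<dots> = (\<Sum>i\<in>{1..n}. c i)"
    by (intro sum.cong refl) (simp add: orthonormal_basisD'[OF basis])
  finally show ?thesis .
qed

section \<open>The generalized Gell-Mann basis\<close>

definition gm_weight :: "nat \<Rightarrow> nat \<Rightarrow> complex" where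
  "gm_weight l i = (if i < l then 1 else if i = l then - of_nat (l - 1) else 0)"

lemma gmdiag_eq_diag_in:
  "gmdiag n xi l = of_real (1 / sqrt (real (l * (l - 1)))) \<cdot>\<^sub>m diag_in n xi (gm_weight l)"
  by (simp add: gmdiag_def gm_weight_def[abs_def])

lemma sum_gm_weight: "1 \<le> l \<Longrightarrow> (\<Sum>i\<in>{1..m}. gm_weight l i) = (if l \<le> m then 0 else of_nat m)"
proof (induction m)
  case (Suc m)
  then show ?case
    by (auto simp: gm_weight_def of_nat_diff)
qed simp

lemma cnj_gm_weight [simp]: "cnj (gm_weight l i) = gm_weight l i"
  by (simp add: gm_weight_def)

lemma sum_gm_weight_upper:
  assumes "1 \<le> l" "m \<le> m'"
  shows "(\<Sum>i\<in>{m + 1..m'}. gm_weight l i)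
    = (if l \<le> m' then 0 else of_nat m') - (if l \<le> m then 0 else of_nat m)"
proof -
  have "(\<Sum>i\<in>{1..m'}. gm_weight l i) = (\<Sum>i\<in>{1..m}. gm_weight l i) + (\<Sum>i\<in>{m + 1..m'}. gm_weight l i)"
    using sum.ub_add_nat[of 1 m "gm_weight l" "m' - m"] assms by simp
  then show ?thesis
    using sum_gm_weight[OF assms(1), of m] sum_gm_weight[OF assms(1), of m'] assms(2)
    by (auto simp: algebra_simps split: if_splits)
qed

lemma gm_carrier_mat [simp]:
  "gm1 n \<in> carrier_mat n n" "gmdiag n xi l \<in> carrier_mat n n" "gmoff n xi a b \<in> carrier_mat n n"
  by (auto simp: gm1_def gmdiag_def gmoff_def)

lemma diag_coeff_gm1:
  "orthonormal_basis n xi \<Longrightarrow> i \<in> {1..n} \<Longrightarrow> diag_coeff n xi i (gm1 n) = of_real (1 / sqrt (real n))"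
  by (simp add: gm1_def diag_coeff_smult[of _ n] diag_coeff_one)

lemma diag_coeff_gmdiag:
  "orthonormal_basis n xi \<Longrightarrow> i \<in> {1..n} \<Longrightarrow>
   diag_coeff n xi i (gmdiag n xi l) = of_real (1 / sqrt (real (l * (l - 1)))) * gm_weight l i"
  by (simp add: gmdiag_eq_diag_in diag_coeff_smult[of _ n] diag_coeff_diag_in)

lemma diag_coeff_gmoff:
  "orthonormal_basis n xi \<Longrightarrow> i \<in> {1..n} \<Longrightarrow> a \<in> {1..n} \<Longrightarrow> b \<in> {1..n} \<Longrightarrow> a \<noteq> b \<Longrightarrow>
   diag_coeff n xi i (gmoff n xi a b) = 0"
  by (auto simp: gmoff_def diag_coeff_smult[of _ n] diag_coeff_add[of _ n] diag_coeff_diff[of _ n]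
      diag_coeff_Eunit)

lemma of_real_inverse_sqrt_square: "complex_of_real (1 / sqrt x) * complex_of_real (1 / sqrt x) = of_real (1 / x)"
  if "0 \<le> x"
  unfolding of_real_mult[symmetric] using that by simp

lemma tr_gm1:
  assumes "0 < n"
  shows "of_real (1 / sqrt (real n)) * tr (gm1 n) = 1"
proof -
  have "tr (gm1 n) = of_real (1 / sqrt (real n)) * of_nat n"
    by (simp add: gm1_def tr_smult tr_one_mat)
  then have "of_real (1 / sqrt (real n)) * tr (gm1 n) = of_real (1 / sqrt (real n) * (1 / sqrt (real n) * real n))"
    by (simp only: of_real_mult of_real_of_nat_eq)
  also have "1 / sqrt (real n) * (1 / sqrt (real n) * real n) = 1"
    using assms by (simp add: field_simps)
  finally show ?thesis
    by simp
qed

lemma tr_gmdiag: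
  "orthonormal_basis n xi \<Longrightarrow> 1 \<le> l \<Longrightarrow> l \<le> n \<Longrightarrow> tr (gmdiag n xi l) = 0"
  using sum_gm_weight[of l n] by (simp add: gmdiag_eq_diag_in tr_smult tr_diag_in)

lemma tr_gmoff:
  "orthonormal_basis n xi \<Longrightarrow> a \<in> {1..n} \<Longrightarrow> b \<in> {1..n} \<Longrightarrow> a \<noteq> b \<Longrightarrow> tr (gmoff n xi a b) = 0"
  by (auto simp: gmoff_def tr_smult tr_add[of _ n] tr_diff[of _ n] tr_Eunit)

section \<open>The walk built from a unitary and two complementary projections\<close>

locale projected_walk =
  fixes n n1 :: nat and xi :: "nat \<Rightarrow> complex vec" and U B1 B2 :: "complex mat"
  assumes basis: "orthonormal_basis n xi"
    and n1_le: "n1 \<le> n"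
    and unitary: "unitary_mat n U"
    and B1_eq: "B1 = proj_span n xi 1 n1 * U"
    and B2_eq: "B2 = proj_span n xi (n1 + 1) n * U"
    and unital: "B1 * adj B1 + B2 * adj B2 = 1\<^sub>m n"
begin

definition "P1 = proj_on n xi {1..n1}"
definition "P2 = proj_on n xi {n1 + 1..n}"

lemma P_carrier_mat [simp]:
  "P1 \<in> carrier_mat n n" "dim_row P1 = n" "dim_col P1 = n"
  "P2 \<in> carrier_mat n n" "dim_row P2 = n" "dim_col P2 = n"
  by (simp_all add: P1_def P2_def)

lemma U_carrier_mat [simp]: "U \<in> carrier_mat n n" "dim_row U = n" "dim_col U = n"
  using unitary by (auto simp: unitary_mat_def)

lemma adj_P [simp]: "adj P1 = P1" "adj P2 = P2"
  by (simp_all add: P1_def P2_def)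

lemma B_eq: "B1 = P1 * U" "B2 = P2 * U"
  by (simp_all add: B1_eq B2_eq P1_def P2_def proj_span_eq_proj_on)

lemma B_carrier_mat [simp]: "B1 \<in> carrier_mat n n" "B2 \<in> carrier_mat n n"
  by (auto simp: B_eq intro: mult_carrier_mat)

lemma P_mult_P:
  "P1 * P1 = P1" "P2 * P2 = P2" "P1 * P2 = 0\<^sub>m n n" "P2 * P1 = 0\<^sub>m n n"
proof -
  have sub: "{1..n1} \<subseteq> {1..n}" "{n1 + 1..n} \<subseteq> {1..n}"
    using n1_le by auto
  have disj: "{1..n1} \<inter> {n1 + 1..n} = {}" "{n1 + 1..n} \<inter> {1..n1} = {}"
    by auto
  show "P1 * P1 = P1" "P2 * P2 = P2" "P1 * P2 = 0\<^sub>m n n" "P2 * P1 = 0\<^sub>m n n"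
    unfolding P1_def P2_def proj_on_mult[OF basis sub(1) sub(1)] proj_on_mult[OF basis sub(2) sub(2)]
      proj_on_mult[OF basis sub(1) sub(2)] proj_on_mult[OF basis sub(2) sub(1)] disj
    by simp_all
qed

lemma sandwich_unitary:
  assumes "A \<in> carrier_mat n n" "C \<in> carrier_mat n n"
  shows "A * U * adj (C * U) = A * adj C"
proof -
  have "A * U * adj (C * U) = A * (U * adj U) * adj C"
    using assms by (simp add: adj_mult[of C n n U n] assoc_mult_mat_dim)
  then show ?thesis
    using assms unitary by (simp add: unitary_mat_def)
qed

lemma adj_sandwich_unitary:
  assumes "A \<in> carrier_mat n n" "C \<in> carrier_mat n n"
  shows "adj (A * U) * (C * U) = adj U * (adj A * C) * U"
  using assms by (simp add: adj_mult[of A n n U n] assoc_mult_mat_dim)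

lemma B_mult_adj_B: "B1 * adj B1 = P1" "B2 * adj B2 = P2" "B1 * adj B2 = 0\<^sub>m n n"
  by (simp_all add: B_eq sandwich_unitary P_mult_P)

lemma adj_B_mult_B: "adj B2 * B1 = 0\<^sub>m n n" "adj B1 * B1 + adj B2 * B2 = 1\<^sub>m n"
proof -
  have P1_P2: "P1 + P2 = 1\<^sub>m n"
    using unital by (simp add: B_mult_adj_B)
  show "adj B2 * B1 = 0\<^sub>m n n"
    by (simp add: B_eq adj_sandwich_unitary P_mult_P)
  have "adj U * (P1 + P2) * U = adj U * P1 * U + adj U * P2 * U"
  proof -
    have "adj U * P1 \<in> carrier_mat n n" "adj U * P2 \<in> carrier_mat n n"
      by (auto intro: mult_carrier_mat)
    then show ?thesis
      using mult_add_distrib_mat[of "adj U" n n P1 n P2] add_mult_distrib_mat[of "adj U * P1" n n "adj U * P2" U n]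
      by simp
  qed
  then have "adj B1 * B1 + adj B2 * B2 = adj U * (P1 + P2) * U"
    by (simp add: B_eq adj_sandwich_unitary P_mult_P)
  then show "adj B1 * B1 + adj B2 * B2 = 1\<^sub>m n"
    using unitary by (simp add: P1_P2 unitary_mat_def)
qed

lemma hs_Lmap_gm1:
  assumes "X \<in> carrier_mat n n"
  shows "hs X (Lmap p B1 B2 k (k + \<nu>) (gm1 n))
    = of_real (1 / sqrt (real n)) * (omega \<nu> * (\<Sum>i\<in>{1..n1}. cnj (diag_coeff n xi i X))
        + cnj (omega \<nu>) * (\<Sum>i\<in>{n1 + 1..n}. cnj (diag_coeff n xi i X)))"
  using assms unfolding gm1_def
  by (simp add: hs_Lmap_scalar_identity[of X n] B_mult_adj_B P1_def P2_def hs_proj_on[of X n])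

lemma hs_gm1_Lmap:
  assumes "R \<in> carrier_mat n n"
  shows "hs (gm1 n) (Lmap p B1 B2 k (k + \<nu>) R)
    = of_real (1 / sqrt (real n)) * (omega \<nu> * tr R - 2 * \<i> * of_real (sin \<nu>) * tr (B2 * R * adj B2))"
  using assms unfolding gm1_def
  by (simp add: hs_scalar_left[of _ n] tr_Lmap[of R n] adj_B_mult_B)

lemma hs_gmoff_Lmap_gm1:
  assumes "a \<in> {1..n}" "b \<in> {1..n}" "a \<noteq> b"
  shows "hs (gmoff n xi a b) (Lmap p B1 B2 k (k + \<nu>) (gm1 n)) = 0"
proof -
  have "diag_coeff n xi i (gmoff n xi a b) = 0" if "i \<in> {1..n}" for i
    using diag_coeff_gmoff[OF basis that assms] .
  then show ?thesis
    using n1_le by (simp add: hs_Lmap_gm1)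
qed

lemma hs_gm1_Lmap_gm1:
  "hs (gm1 n) (Lmap p B1 B2 k (k + \<nu>) (gm1 n))
    = of_real (2 * real (n - n1) * cos \<nu> / real n) + of_real ((real n1 - real (n - n1)) / real n) * omega \<nu>"
proof -
  let ?s = "complex_of_real (1 / sqrt (real n))"
  have "diag_coeff n xi i (gm1 n) = ?s" if "i \<in> {1..n}" for i
    using diag_coeff_gm1[OF basis that] .
  then have sums: "(\<Sum>i\<in>{1..n1}. cnj (diag_coeff n xi i (gm1 n))) = of_nat n1 * ?s"
    "(\<Sum>i\<in>{n1 + 1..n}. cnj (diag_coeff n xi i (gm1 n))) = of_nat (n - n1) * ?s"
    using n1_le by simp_all
  have "hs (gm1 n) (Lmap p B1 B2 k (k + \<nu>) (gm1 n))
      = ?s * (omega \<nu> * (of_nat n1 * ?s) + cnj (omega \<nu>) * (of_nat (n - n1) * ?s))"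
    unfolding hs_Lmap_gm1[OF gm_carrier_mat(1)] sums ..
  also have "\<dots> = ?s * ?s * (omega \<nu> * of_nat n1 + cnj (omega \<nu>) * of_nat (n - n1))"
    by (simp only: algebra_simps)
  also have "?s * ?s = of_real (1 / real n)"
    by (rule of_real_inverse_sqrt_square) simp
  finally show ?thesis
    using n1_le by (simp add: omega_eq_cis complex_eq_iff field_simps of_nat_diff)
qed

lemma hs_gmdiag_Lmap_gm1:
  "hs (gmdiag n xi l) (Lmap p B1 B2 k (k + \<nu>) (gm1 n))
    = of_real (1 / sqrt (real n)) * of_real (1 / sqrt (real (l * (l - 1))))
      * (omega \<nu> * (\<Sum>i\<in>{1..n1}. gm_weight l i) + cnj (omega \<nu>) * (\<Sum>i\<in>{n1 + 1..n}. gm_weight l i))"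
proof -
  have "cnj (diag_coeff n xi i (gmdiag n xi l)) = of_real (1 / sqrt (real (l * (l - 1)))) * gm_weight l i"
    if "i \<in> {1..n}" for i
    using diag_coeff_gmdiag[OF basis that] by simp
  then have "(\<Sum>i\<in>{1..n1}. cnj (diag_coeff n xi i (gmdiag n xi l)))
      = of_real (1 / sqrt (real (l * (l - 1)))) * (\<Sum>i\<in>{1..n1}. gm_weight l i)"
    "(\<Sum>i\<in>{n1 + 1..n}. cnj (diag_coeff n xi i (gmdiag n xi l)))
      = of_real (1 / sqrt (real (l * (l - 1)))) * (\<Sum>i\<in>{n1 + 1..n}. gm_weight l i)"
    using n1_le by (simp_all add: sum_distrib_left)
  then show ?thesis
    unfolding hs_Lmap_gm1[OF gm_carrier_mat(2)] by (simp only: algebra_simps)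
qed

lemma hs_gmdiag_Lmap_gm1_lower:
  "l \<in> {2..n1} \<Longrightarrow> hs (gmdiag n xi l) (Lmap p B1 B2 k (k + \<nu>) (gm1 n)) = 0"
  using n1_le sum_gm_weight[of l n1] sum_gm_weight_upper[of l n1 n] by (simp add: hs_gmdiag_Lmap_gm1)

lemma hs_gmdiag_Lmap_gm1_upper:
  assumes "l \<in> {n1 + 1..n}"
  shows "hs (gmdiag n xi l) (Lmap p B1 B2 k (k + \<nu>) (gm1 n))
    = of_real (2 * real n1) * \<i> * of_real (sin \<nu>) / of_real (sqrt (real n * real (l - 1) * real l))"
proof -
  have "hs (gmdiag n xi l) (Lmap p B1 B2 k (k + \<nu>) (gm1 n))
      = of_real (1 / sqrt (real n)) * of_real (1 / sqrt (real (l * (l - 1))))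
        * (- of_nat n1 * (cnj (omega \<nu>) - omega \<nu>))"
    unfolding hs_gmdiag_Lmap_gm1
    using assms n1_le sum_gm_weight[of l n1] sum_gm_weight_upper[of l n1 n] by (simp add: algebra_simps)
  also have "of_real (1 / sqrt (real n)) * of_real (1 / sqrt (real (l * (l - 1))))
      = complex_of_real (1 / sqrt (real n * real (l - 1) * real l))"
    by (simp add: real_sqrt_mult mult.commute mult.left_commute)
  finally show ?thesis
    by (simp add: cnj_omega_minus_omega field_simps)
qed

lemma hs_gm1_Lmap_traceless:
  assumes "R \<in> carrier_mat n n" "tr R = 0"
  shows "hs (gm1 n) (Lmap p B1 B2 k (k + \<nu>) R)
    = - 2 * \<i> * of_real (sin \<nu>) * of_real (1 / sqrt (real n)) * tr (B2 * R * adj B2)"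
  using assms by (simp add: hs_gm1_Lmap)

lemma hs_gm1_Lmap_gmdiag:
  "l \<in> {1..n} \<Longrightarrow> hs (gm1 n) (Lmap p B1 B2 k (k + \<nu>) (gmdiag n xi l))
    = - 2 * \<i> * of_real (sin \<nu>) * of_real (1 / sqrt (real n)) * tr (B2 * gmdiag n xi l * adj B2)"
  by (simp add: hs_gm1_Lmap_traceless tr_gmdiag[OF basis])

lemma hs_gm1_Lmap_gmoff:
  "a \<in> {1..n} \<Longrightarrow> b \<in> {1..n} \<Longrightarrow> a \<noteq> b \<Longrightarrow> hs (gm1 n) (Lmap p B1 B2 k (k + \<nu>) (gmoff n xi a b))
    = - 2 * \<i> * of_real (sin \<nu>) * of_real (1 / sqrt (real n)) * tr (B2 * gmoff n xi a b * adj B2)"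
  by (simp add: hs_gm1_Lmap_traceless tr_gmoff[OF basis])

lemma hs_gmdiag_Lmap_diag_gm1:
  "l \<in> {2..n} \<Longrightarrow> hs (gmdiag n xi l) (Lmap p B1 B2 k k (gm1 n)) = 0"
  using hs_gmdiag_Lmap_gm1_lower[of l p k 0] hs_gmdiag_Lmap_gm1_upper[of l p k 0]
  by (cases "l \<le> n1") auto

lemma hs_gm1_Lmap_gm1_trace_form:
  assumes "0 < n"
  shows "hs (gm1 n) (Lmap p B1 B2 k (k + \<nu>) (gm1 n))
    = omega \<nu> - 2 * \<i> * of_real (sin \<nu>) * of_real (1 / sqrt (real n)) * tr (B2 * gm1 n * adj B2)"
proof -
  have "hs (gm1 n) (Lmap p B1 B2 k (k + \<nu>) (gm1 n))
      = omega \<nu> * (of_real (1 / sqrt (real n)) * tr (gm1 n))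
        - 2 * \<i> * of_real (sin \<nu>) * of_real (1 / sqrt (real n)) * tr (B2 * gm1 n * adj B2)"
    unfolding hs_gm1_Lmap[OF gm_carrier_mat(1)] by (simp only: algebra_simps)
  then show ?thesis
    by (simp only: tr_gm1[OF assms] mult_1_right)
qed

end

theorem mainTheorem1:
  fixes n n1 n2 :: nat and xi :: "nat \<Rightarrow> complex vec" and U B1 B2 :: "complex mat"
    and p k \<nu> :: real
  assumes hn: "n \<ge> 2" and hn1: "1 \<le> n1" "n1 \<le> n - 1" and hn2: "n2 = n - n1"
    and hxi: "orthonormal_basis n xi"
    and hU: "unitary_mat n U"
    and hB1: "B1 = proj_span n xi 1 n1 * U"
    and hB2: "B2 = proj_span n xi (n1 + 1) n * U"
    and hunital: "B1 * adj B1 + B2 * adj B2 = 1\<^sub>m n"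
    and hp: "0 \<le> p" "p \<le> 1"
  shows
    "(\<forall>a\<in>{1..n}. \<forall>b\<in>{1..n}. a \<noteq> b \<longrightarrow>
        hs (gmoff n xi a b) (Lmap p B1 B2 k (k + \<nu>) (gm1 n)) = 0)
   \<and> hs (gm1 n) (Lmap p B1 B2 k (k + \<nu>) (gm1 n))
        = of_real (2 * real n2 * cos \<nu> / real n) + of_real ((real n1 - real n2) / real n) * omega \<nu>
   \<and> (\<forall>l\<in>{2..n1}. hs (gmdiag n xi l) (Lmap p B1 B2 k (k + \<nu>) (gm1 n)) = 0)
   \<and> (\<forall>l\<in>{n1+1..n}. hs (gmdiag n xi l) (Lmap p B1 B2 k (k + \<nu>) (gm1 n))
        = of_real (2 * real n1) * \<i> * of_real (sin \<nu>) / of_real (sqrt (real n * real (l - 1) * real l)))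
   \<and> hs (gm1 n) (Lmap p B1 B2 k (k + \<nu>) (gm1 n))
        = omega \<nu> - 2 * \<i> * of_real (sin \<nu>) * of_real (1 / sqrt (real n)) * tr (B2 * gm1 n * adj B2)
   \<and> (\<forall>l\<in>{2..n}. hs (gm1 n) (Lmap p B1 B2 k (k + \<nu>) (gmdiag n xi l))
        = - 2 * \<i> * of_real (sin \<nu>) * of_real (1 / sqrt (real n)) * tr (B2 * gmdiag n xi l * adj B2))
   \<and> (\<forall>a\<in>{1..n}. \<forall>b\<in>{1..n}. a \<noteq> b \<longrightarrow>
        hs (gm1 n) (Lmap p B1 B2 k (k + \<nu>) (gmoff n xi a b))
        = - 2 * \<i> * of_real (sin \<nu>) * of_real (1 / sqrt (real n)) * tr (B2 * gmoff n xi a b * adj B2))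
   \<and> hs (gm1 n) (Lmap p B1 B2 k k (gm1 n)) = 1
   \<and> (\<forall>l\<in>{2..n}. hs (gmdiag n xi l) (Lmap p B1 B2 k k (gm1 n)) = 0
                 \<and> hs (gm1 n) (Lmap p B1 B2 k k (gmdiag n xi l)) = 0)
   \<and> (\<forall>a\<in>{1..n}. \<forall>b\<in>{1..n}. a \<noteq> b \<longrightarrow>
        hs (gmoff n xi a b) (Lmap p B1 B2 k k (gm1 n)) = 0
        \<and> hs (gm1 n) (Lmap p B1 B2 k k (gmoff n xi a b)) = 0)"
proof -
  interpret projected_walk n n1 xi U B1 B2
    using hxi hn1 hn hU hB1 hB2 hunital by unfold_locales auto
  have n_pos: "0 < n"
    using hn by simp
  show ?thesis
    unfolding hn2
    using hs_gmoff_Lmap_gm1 hs_gm1_Lmap_gm1 hs_gmdiag_Lmap_gm1_lower hs_gmdiag_Lmap_gm1_upper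
      hs_gm1_Lmap_gm1_trace_form[OF n_pos] hs_gm1_Lmap_gmdiag hs_gm1_Lmap_gmoff
      hs_gm1_Lmap_gm1_trace_form[OF n_pos, of p k 0] hs_gm1_Lmap_gmdiag[of _ p k 0]
      hs_gm1_Lmap_gmoff[of _ _ p k 0] hs_gmoff_Lmap_gm1[of _ _ p k 0] hs_gmdiag_Lmap_diag_gm1
    by (simp add: omega_def)
qed

end
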